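(* Let $C(t,p;x)=p+\sum_{n\ge1}x^n\sum_{D\in\mathcal{D}_n}t^{\mathrm{seg}(D)}p^{\mathrm{lseg}(D)}$, and write $C=C(t,p;x)$ and $C(t,1)=C(t,1;x)$. Then $$tp^2x^2C(t,1)^2+px(C-pxC-p)C(t,1)-(C-pxC-p)=0.$$
   Context: A Dyck path of semilength $n$ is a lattice path from $(0,0)$ to $(n,n)$ with east steps $(1,0)$ and north steps $(0,1)$ never passing above $y=x$; encode it as $d_1\cdots d_n$ with $d_i$ the number of north steps before the $i$-th east step. $\mathcal{D}_n$ is the set of these paths. A segment is a maximal string of at least two consecutive east steps of the same height; $\mathrm{seg}(D)$ is the number of segments. $\mathrm{lseg}(D)=i$ if the $i$-th east step is the last step of the leftmost segment of $D$, and $\mathrm{lseg}(D)=n+1$ if $D$ has no segment. *)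

theory Defs
  imports "HOL-Computational_Algebra.Formal_Power_Series"
begin

text \<open>A Dyck path of semilength n is encoded as the list [d_1,...,d_n] (0-indexed in
Isabelle: d ! (i-1) = d_i), where d_i is the number of north steps before the i-th east
step. The path never goes above y = x iff the sequence is weakly increasing and
d_i \<le> i - 1; the remaining north steps come after the last east step.\<close>

definition dyck_paths :: "nat \<Rightarrow> nat list set" where
  "dyck_paths n = {d. length d = n \<and> sorted d \<and> (\<forall>i<n. d ! i \<le> i)}"

text \<open>Segments: maximal index intervals [a,b] (0-indexed, a < b, i.e. at least two
east steps) of consecutive east steps at the same height.\<close>

definition segments :: "nat list \<Rightarrow> (nat \<times> nat) set" where
  "segments d = {(a, b). a < b \<and> b < length d \<and> (\<forall>k\<in>{a..b}. d ! k = d ! a)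
      \<and> (a = 0 \<or> d ! (a - 1) \<noteq> d ! a)
      \<and> (b = length d - 1 \<or> d ! (b + 1) \<noteq> d ! b)}"

definition seg :: "nat list \<Rightarrow> nat" where
  "seg d = card (segments d)"

definition lseg :: "nat list \<Rightarrow> nat" where
  "lseg d = (if segments d = {} then length d + 1
     else (let a0 = Min (fst ` segments d) in Suc (THE b. (a0, b) \<in> segments d)))"

definition Cfps :: "'a::comm_ring_1 \<Rightarrow> 'a \<Rightarrow> 'a fps" where
  "Cfps t p = Abs_fps (\<lambda>n. if n = 0 then p
      else (\<Sum>D\<in>dyck_paths n. t ^ seg D * p ^ lseg D))"

end

theory Submission
  imports Defs
begin

text \<open>
  Let T = Cfps_flat t p collect the paths whose first two east steps are at height 0. Every other
  nonempty path is an isolated first east step followed by a lifted path, which keeps seg and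
  raises lseg by one; hence C = p + pxC + T.

  For T, cut the path at its first return to the diagonal, D = E D1 N D2 with D1 nonempty. D2 lies
  strictly above the rest, so its segments are untouched and contribute only t^seg(D2), while lseg
  is decided inside E D1. If D1 starts with a segment, the extra east step lengthens it (a factor
  p); otherwise E D1 starts with a segment of length exactly two followed by a lifted path (a
  factor t p^2). Hence T = pxT C(t,1) + t p^2 x^2 C(t,1)^2, which is the claim since
  T = C - pxC - p.
\<close>

section \<open>Segments of a list\<close>

lemma in_segments_iff:
  "(a, b) \<in> segments d \<longleftrightarrow> a < b \<and> b < length d \<and> (\<forall>k\<in>{a..b}. d ! k = d ! a)
      \<and> (a = 0 \<or> d ! (a - 1) \<noteq> d ! a) \<and> (b = length d - 1 \<or> d ! (b + 1) \<noteq> d ! b)"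
  by (simp add: segments_def)

lemma segments_bounds: "(a, b) \<in> segments d \<Longrightarrow> a < b \<and> b < length d"
  by (simp add: in_segments_iff)

lemma segments_Nil [simp]: "segments [] = {}"
  by (simp add: segments_def)

lemma finite_segments: "finite (segments d)"
proof (rule finite_subset)
  show "segments d \<subseteq> {..<length d} \<times> {..<length d}"
    using segments_bounds by fastforce
qed simp

lemma segments_same_start_eq:
  assumes "(a, b) \<in> segments d" and "(a, b') \<in> segments d"
  shows "b = b'"
proof (rule ccontr)
  assume "b \<noteq> b'"
  then obtain c c' where c: "(a, c) \<in> segments d" and c': "(a, c') \<in> segments d" and "c < c'"
    using assms by (cases "b < b'") auto
  from c' have const: "\<forall>k\<in>{a..c'}. d ! k = d ! a" and "c' < length d"
    unfolding in_segments_iff by blast+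
  have "a \<le> c" using segments_bounds[OF c] by simp
  from c have maximal: "c = length d - 1 \<or> d ! (c + 1) \<noteq> d ! c"
    unfolding in_segments_iff by blast
  have "c \<noteq> length d - 1" using \<open>c < c'\<close> \<open>c' < length d\<close> by linarith
  moreover have "c \<in> {a..c'}" "c + 1 \<in> {a..c'}" using \<open>a \<le> c\<close> \<open>c < c'\<close> by simp_all
  ultimately show False using maximal const by metis
qed

lemma segments_map:
  assumes "inj f"
  shows "segments (map f xs) = segments xs"
proof (rule set_eqI)
  fix z :: "nat \<times> nat"
  obtain a b where z: "z = (a, b)" by fastforce
  have nth_eq: "map f xs ! i = map f xs ! j \<longleftrightarrow> xs ! i = xs ! j"
    if "i < length xs" "j < length xs" for i j
    using that assms by (simp add: inj_eq)
  show "z \<in> segments (map f xs) \<longleftrightarrow> z \<in> segments xs"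
  proof (cases "a < b \<and> b < length xs")
    case True
    then have "(\<forall>k\<in>{a..b}. map f xs ! k = map f xs ! a) \<longleftrightarrow> (\<forall>k\<in>{a..b}. xs ! k = xs ! a)"
      using nth_eq by auto
    moreover have "map f xs ! (a - 1) = map f xs ! a \<longleftrightarrow> xs ! (a - 1) = xs ! a"
      using True nth_eq[of "a - 1" a] by (simp add: less_imp_diff_less)
    moreover have "map f xs ! (b + 1) = map f xs ! b \<longleftrightarrow> xs ! (b + 1) = xs ! b"
      if "b \<noteq> length xs - 1"
    proof -
      have "b + 1 < length xs" using True that by linarith
      then show ?thesis using True nth_eq[of "b + 1" b] by simp
    qed
    ultimately show ?thesis unfolding z in_segments_iff length_map by blast
  qed (auto simp: z in_segments_iff)
qed

lemma seg_map: "inj f \<Longrightarrow> seg (map f xs) = seg xs"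
  by (simp add: seg_def segments_map)

lemma lseg_map: "inj f \<Longrightarrow> lseg (map f xs) = lseg xs"
  by (simp add: lseg_def segments_map)

lemma lseg_no_segments: "segments d = {} \<Longrightarrow> lseg d = length d + 1"
  by (simp add: lseg_def)

lemma lseg_eq_Suc:
  assumes "(a, b) \<in> segments d" and "\<And>a' b'. (a', b') \<in> segments d \<Longrightarrow> a \<le> a'"
  shows "lseg d = Suc b"
proof -
  have "Min (fst ` segments d) = a"
    using assms finite_segments by (intro Min_eqI) force+
  moreover have "(THE b. (a, b) \<in> segments d) = b"
    using assms(1) segments_same_start_eq by blast
  ultimately show ?thesis using assms(1) by (auto simp: lseg_def)
qed

lemma segments_leftmost:
  assumes "segments d \<noteq> {}"
  obtains a b where "(a, b) \<in> segments d" and "\<And>a' b'. (a', b') \<in> segments d \<Longrightarrow> a \<le> a'"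
proof -
  have "Min (fst ` segments d) \<in> fst ` segments d"
    using assms finite_segments by (intro Min_in) auto
  then obtain b where "(Min (fst ` segments d), b) \<in> segments d" by force
  moreover have "Min (fst ` segments d) \<le> a'" if "(a', b') \<in> segments d" for a' b'
    using that by (intro Min_le finite_imageI finite_segments rev_image_eqI[of "(a', b')"]) simp_all
  ultimately show ?thesis using that by blast
qed

lemma append_nth_boundary:
  assumes "xs \<noteq> []" "ys \<noteq> []"
  shows "(xs @ ys) ! (length xs - 1) = last xs" "(xs @ ys) ! length xs = hd ys"
  using assms by (simp_all add: nth_append last_conv_nth hd_conv_nth)

lemma segments_append_left:
  assumes "ys = [] \<or> last xs \<noteq> hd ys" and "b < length xs"
  shows "(a, b) \<in> segments (xs @ ys) \<longleftrightarrow> (a, b) \<in> segments xs"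
proof -
  have same: "(xs @ ys) ! k = xs ! k" if "k \<le> b" for k
    using that assms(2) by (simp add: nth_append)
  have "(b = length (xs @ ys) - 1 \<or> (xs @ ys) ! (b + 1) \<noteq> (xs @ ys) ! b)
      \<longleftrightarrow> (b = length xs - 1 \<or> xs ! (b + 1) \<noteq> xs ! b)"
  proof (cases "b = length xs - 1")
    case True
    then have "xs \<noteq> []" "b + 1 = length xs" using assms(2) by auto
    then show ?thesis using True assms(1) append_nth_boundary[of xs ys] by (cases "ys = []") auto
  next
    case False
    then show ?thesis using assms(2) by (auto simp: nth_append)
  qed
  moreover have "(\<forall>k\<in>{a..b}. (xs @ ys) ! k = (xs @ ys) ! a) \<longleftrightarrow> (\<forall>k\<in>{a..b}. xs ! k = xs ! a)"
    if "a < b" using that by (simp add: same)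
  moreover have "(xs @ ys) ! (a - 1) = xs ! (a - 1)" "(xs @ ys) ! a = xs ! a" if "a < b"
    using that by (simp_all add: same)
  ultimately show ?thesis
    using assms(2) unfolding in_segments_iff by (cases "a < b") simp_all
qed

lemma segments_append_right:
  assumes "xs = [] \<or> last xs \<noteq> hd ys"
  shows "(a + length xs, b + length xs) \<in> segments (xs @ ys) \<longleftrightarrow> (a, b) \<in> segments ys"
proof (cases "a < b \<and> b < length ys")
  case True
  have shifted: "(xs @ ys) ! (k + length xs) = ys ! k" for k
    by (simp add: nth_append)
  have "(\<forall>k\<in>{a + length xs..b + length xs}. (xs @ ys) ! k = (xs @ ys) ! (a + length xs))
      \<longleftrightarrow> (\<forall>k\<in>{a..b}. ys ! k = ys ! a)"
    unfolding image_add_atLeastAtMost'[symmetric] ball_simps(9) shifted ..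
  moreover have "(a + length xs = 0 \<or> (xs @ ys) ! (a + length xs - 1) \<noteq> (xs @ ys) ! (a + length xs))
      \<longleftrightarrow> (a = 0 \<or> ys ! (a - 1) \<noteq> ys ! a)"
  proof (cases "a = 0 \<and> xs \<noteq> []")
    case True
    moreover have "ys \<noteq> []" using \<open>a < b \<and> b < length ys\<close> by auto
    ultimately show ?thesis using assms append_nth_boundary[of xs ys] by auto
  next
    case False
    then show ?thesis by (auto simp: nth_append)
  qed
  moreover have "(xs @ ys) ! (b + length xs + 1) = ys ! (b + 1)"
    using shifted[of "b + 1"] by (simp add: add.commute add.left_commute)
  moreover have "b + length xs = length (xs @ ys) - 1 \<longleftrightarrow> b = length ys - 1"
    using True by auto
  ultimately show ?thesis using True unfolding in_segments_iff by (simp add: shifted)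
next
  case False
  then show ?thesis unfolding in_segments_iff by auto
qed

lemma segments_append_not_across:
  assumes "last xs \<noteq> hd ys" and "(a, b) \<in> segments (xs @ ys)" and "a < length xs"
  shows "b < length xs"
proof (rule ccontr)
  assume "\<not> b < length xs"
  with assms(2,3) have "length xs - 1 \<in> {a..b}" "length xs \<in> {a..b}" "xs \<noteq> []" "ys \<noteq> []"
    using segments_bounds[OF assms(2)] by auto
  with assms(2) have "last xs = hd ys"
    using append_nth_boundary[of xs ys] unfolding in_segments_iff by metis
  with assms(1) show False ..
qed

lemma segments_append:
  assumes "xs = [] \<or> ys = [] \<or> last xs \<noteq> hd ys"
  shows "segments (xs @ ys) = segments xs \<union> (\<lambda>(a, b). (a + length xs, b + length xs)) ` segments ys"
    (is "_ = _ \<union> ?shift ` _")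
proof (cases "xs = [] \<or> ys = []")
  case False
  with assms have boundary: "last xs \<noteq> hd ys" by blast
  show ?thesis
  proof (rule set_eqI)
    fix z :: "nat \<times> nat"
    obtain a b where z: "z = (a, b)" by fastforce
    consider "b < length xs" | "a < length xs" "length xs \<le> b" | "length xs \<le> a" "length xs \<le> b"
      by linarith
    then show "z \<in> segments (xs @ ys) \<longleftrightarrow> z \<in> segments xs \<union> ?shift ` segments ys"
    proof cases
      case 1
      then show ?thesis using boundary segments_append_left[of ys xs b a] unfolding z by auto
    next
      case 2
      then have "(a, b) \<notin> segments (xs @ ys)"
        using boundary segments_append_not_across[of xs ys a b] by auto
      then show ?thesis using 2 segments_bounds[of a b xs] unfolding z by auto
    next
      case 3
      then have shifted: "z = ?shift (a - length xs, b - length xs)" unfolding z by auto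
      have "inj ?shift" by (auto simp: inj_def)
      then have "z \<in> ?shift ` segments ys \<longleftrightarrow> (a - length xs, b - length xs) \<in> segments ys"
        unfolding shifted by (rule inj_image_mem_iff)
      moreover have "z \<in> segments (xs @ ys) \<longleftrightarrow> (a - length xs, b - length xs) \<in> segments ys"
        using boundary segments_append_right shifted by simp
      moreover have "z \<notin> segments xs" using segments_bounds[of a b xs] 3 z by auto
      ultimately show ?thesis by blast
    qed
  qed
qed auto

lemma seg_append:
  assumes "xs = [] \<or> ys = [] \<or> last xs \<noteq> hd ys"
  shows "seg (xs @ ys) = seg xs + seg ys"
proof -
  let ?shift = "\<lambda>(a, b). (a + length xs, b + length xs)"
  have "inj_on ?shift (segments ys)" by (auto simp: inj_on_def)
  moreover have "segments xs \<inter> ?shift ` segments ys = {}"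
    using segments_bounds by fastforce
  ultimately show ?thesis
    unfolding seg_def segments_append[OF assms]
    by (simp add: card_Un_disjoint finite_segments card_image)
qed

lemma lseg_append:
  assumes "xs = [] \<or> ys = [] \<or> last xs \<noteq> hd ys"
  shows "lseg (xs @ ys) = (if segments xs = {} then length xs + lseg ys else lseg xs)"
proof -
  let ?shift = "\<lambda>(a, b). (a + length xs, b + length xs)"
  have split: "segments (xs @ ys) = segments xs \<union> ?shift ` segments ys"
    by (rule segments_append[OF assms])
  show ?thesis
  proof (cases "segments xs = {}")
    case False
    then obtain a b where ab: "(a, b) \<in> segments xs"
      and leftmost: "\<And>a' b'. (a', b') \<in> segments xs \<Longrightarrow> a \<le> a'"
      using segments_leftmost by blast
    have "a < length xs" using segments_bounds[OF ab] by simp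
    then have "lseg (xs @ ys) = Suc b"
      using ab leftmost by (intro lseg_eq_Suc) (auto simp: split)
    then show ?thesis using False lseg_eq_Suc[OF ab leftmost] by simp
  next
    case True
    show ?thesis
    proof (cases "segments ys = {}")
      case True
      with \<open>segments xs = {}\<close> show ?thesis by (simp add: split lseg_no_segments)
    next
      case False
      then obtain a b where ab: "(a, b) \<in> segments ys"
        and leftmost: "\<And>a' b'. (a', b') \<in> segments ys \<Longrightarrow> a \<le> a'"
        using segments_leftmost by blast
      have "lseg (xs @ ys) = Suc (b + length xs)"
        using ab leftmost \<open>segments xs = {}\<close> by (intro lseg_eq_Suc) (auto simp: split)
      then show ?thesis using True lseg_eq_Suc[OF ab leftmost] by simp
    qed
  qed
qed

lemma segments_replicate: "segments (replicate L x) = (if 2 \<le> L then {(0, L - 1)} else {})"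
proof (cases "2 \<le> L")
  case True
  have "(a, b) \<in> segments (replicate L x) \<longleftrightarrow> a = 0 \<and> b = L - 1" for a b
  proof
    assume ab: "(a, b) \<in> segments (replicate L x)"
    then have "a < b" "b < L" using segments_bounds by fastforce+
    moreover from ab have "a = 0 \<or> replicate L x ! (a - 1) \<noteq> replicate L x ! a"
      and "b = L - 1 \<or> replicate L x ! (b + 1) \<noteq> replicate L x ! b"
      unfolding in_segments_iff length_replicate by blast+
    ultimately show "a = 0 \<and> b = L - 1" by (cases "b + 1 < L") auto
  next
    assume "a = 0 \<and> b = L - 1"
    with True show "(a, b) \<in> segments (replicate L x)" by (auto simp: in_segments_iff)
  qed
  with True show ?thesis by auto
next
  case False
  then show ?thesis using segments_bounds by fastforce
qed

lemma seg_replicate_append: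
  assumes "r = [] \<or> hd r \<noteq> x"
  shows "seg (replicate L x @ r) = (if 2 \<le> L then Suc (seg r) else seg r)"
proof -
  have "replicate L x = [] \<or> r = [] \<or> last (replicate L x) \<noteq> hd r"
    using assms by (cases L) auto
  moreover have "seg (replicate L x) = (if 2 \<le> L then 1 else 0)"
    by (simp add: seg_def segments_replicate)
  ultimately show ?thesis by (simp add: seg_append)
qed

lemma lseg_replicate_append:
  assumes "r = [] \<or> hd r \<noteq> x"
  shows "lseg (replicate L x @ r) = (if 2 \<le> L then L else L + lseg r)"
proof -
  have "replicate L x = [] \<or> r = [] \<or> last (replicate L x) \<noteq> hd r"
    using assms by (cases L) auto
  moreover have "lseg (replicate L x) = L" if "2 \<le> L"
    using lseg_eq_Suc[of 0 "L - 1" "replicate L x"] that by (simp add: segments_replicate)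
  ultimately show ?thesis by (simp add: lseg_append segments_replicate)
qed

lemma seg_Cons_hd_neq: "xs = [] \<or> hd xs \<noteq> x \<Longrightarrow> seg (x # xs) = seg xs"
  using seg_replicate_append[of xs x 1] by simp

lemma lseg_Cons_hd_neq: "xs = [] \<or> hd xs \<noteq> x \<Longrightarrow> lseg (x # xs) = Suc (lseg xs)"
  using lseg_replicate_append[of xs x 1] by simp

lemma seg_Cons_Cons_hd_neq: "xs = [] \<or> hd xs \<noteq> x \<Longrightarrow> seg (x # x # xs) = Suc (seg xs)"
  using seg_replicate_append[of xs x 2] by (simp add: numeral_2_eq_2)

lemma lseg_Cons_Cons_hd_neq: "xs = [] \<or> hd xs \<noteq> x \<Longrightarrow> lseg (x # x # xs) = 2"
  using lseg_replicate_append[of xs x 2] by (simp add: numeral_2_eq_2)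

lemma Cons_Cons_eq_replicate_append:
  obtains L r where "x # x # xs = replicate L x @ r" and "2 \<le> L" and "r = [] \<or> hd r \<noteq> x"
proof
  let ?ys = "x # x # xs"
  have "replicate (length (takeWhile (\<lambda>y. y = x) ?ys)) x = takeWhile (\<lambda>y. y = x) ?ys"
    by (rule replicate_length_same) (auto dest: set_takeWhileD)
  then show "?ys = replicate (length (takeWhile (\<lambda>y. y = x) ?ys)) x @ dropWhile (\<lambda>y. y = x) ?ys"
    by (simp only: takeWhile_dropWhile_id)
  show "2 \<le> length (takeWhile (\<lambda>y. y = x) ?ys)" by simp
  show "dropWhile (\<lambda>y. y = x) ?ys = [] \<or> hd (dropWhile (\<lambda>y. y = x) ?ys) \<noteq> x"
    using hd_dropWhile[of "\<lambda>y. y = x" ?ys] by blast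
qed

lemma seg_Cons_Cons_Cons: "seg (x # x # x # xs) = seg (x # x # xs)"
proof -
  obtain L r where xs: "x # x # xs = replicate L x @ r" and "2 \<le> L" and r: "r = [] \<or> hd r \<noteq> x"
    by (rule Cons_Cons_eq_replicate_append)
  then have xs': "x # x # x # xs = replicate (Suc L) x @ r" by simp
  show ?thesis unfolding xs' unfolding xs seg_replicate_append[OF r] using \<open>2 \<le> L\<close> by simp
qed

lemma lseg_Cons_Cons_Cons: "lseg (x # x # x # xs) = Suc (lseg (x # x # xs))"
proof -
  obtain L r where xs: "x # x # xs = replicate L x @ r" and "2 \<le> L" and r: "r = [] \<or> hd r \<noteq> x"
    by (rule Cons_Cons_eq_replicate_append)
  then have xs': "x # x # x # xs = replicate (Suc L) x @ r" by simp
  show ?thesis unfolding xs' unfolding xs lseg_replicate_append[OF r] using \<open>2 \<le> L\<close> by simp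
qed

lemma segments_Cons_Cons_not_empty: "segments (x # x # xs) \<noteq> {}"
proof -
  obtain L r where xs: "x # x # xs = replicate L x @ r" and "2 \<le> L" and r: "r = [] \<or> hd r \<noteq> x"
    by (rule Cons_Cons_eq_replicate_append)
  then have "seg (x # x # xs) \<noteq> 0" using seg_replicate_append[OF r] by simp
  then show ?thesis by (auto simp: seg_def)
qed

section \<open>The first-return decomposition of Dyck paths\<close>

lemma in_dyck_paths_iff:
  "d \<in> dyck_paths n \<longleftrightarrow> length d = n \<and> sorted d \<and> (\<forall>i<n. d ! i \<le> i)"
  by (simp add: dyck_paths_def)

lemma dyck_paths_0: "dyck_paths 0 = {[]}"
  by (auto simp: in_dyck_paths_iff)

lemma dyck_path_less: "d \<in> dyck_paths n \<Longrightarrow> x \<in> set d \<Longrightarrow> x < n"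
  unfolding in_dyck_paths_iff by (metis in_set_conv_nth le_less_trans)

lemma finite_dyck_paths: "finite (dyck_paths n)"
proof (rule finite_subset)
  show "dyck_paths n \<subseteq> {d. set d \<subseteq> {..<n} \<and> length d = n}"
    using dyck_path_less by (auto simp: in_dyck_paths_iff)
qed (rule finite_lists_length_eq, simp)

lemma dyck_path_Suc_ConsE:
  assumes "d \<in> dyck_paths (Suc m)"
  obtains ds where "d = 0 # ds"
  using assms by (cases d) (auto simp: in_dyck_paths_iff)

lemma Cons_0_map_Suc_in_dyck_paths:
  "d \<in> dyck_paths m \<Longrightarrow> 0 # map Suc d \<in> dyck_paths (Suc m)"
  by (auto simp: in_dyck_paths_iff sorted_map nth_Cons split: nat.split)

definition starts_flat :: "nat list \<Rightarrow> bool" where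
  "starts_flat d \<longleftrightarrow> (\<exists>ds. d = 0 # 0 # ds)"

lemma dyck_paths_Suc_not_starts_flat:
  "{d \<in> dyck_paths (Suc m). \<not> starts_flat d} = (\<lambda>d. 0 # map Suc d) ` dyck_paths m"
proof (intro set_eqI iffI)
  fix d assume "d \<in> {d \<in> dyck_paths (Suc m). \<not> starts_flat d}"
  then have d: "d \<in> dyck_paths (Suc m)" and not_flat: "\<not> starts_flat d" by auto
  obtain ds where d_eq: "d = 0 # ds" using d by (rule dyck_path_Suc_ConsE)
  have sorted: "sorted ds" and bound: "\<forall>i<m. ds ! i \<le> Suc i" and "length ds = m"
    using d unfolding d_eq in_dyck_paths_iff by auto
  have pos: "0 < v" if "v \<in> set ds" for v
  proof -
    have "ds \<noteq> []" using that by auto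
    then have "0 < hd ds" using not_flat unfolding d_eq starts_flat_def by (cases ds) auto
    moreover have "hd ds \<le> v" using sorted that by (cases ds) auto
    ultimately show ?thesis by simp
  qed
  let ?d' = "map (\<lambda>v. v - 1) ds"
  have "map Suc ?d' = ds" using pos by (induction ds) auto
  moreover have "?d' \<in> dyck_paths m"
    unfolding in_dyck_paths_iff
  proof (intro conjI allI impI)
    have "sorted_wrt (\<lambda>x y. x - 1 \<le> y - 1) ds"
      using sorted by (simp add: sorted_wrt_mono_rel[of _ "(\<le>)"] diff_le_mono)
    then show "sorted ?d'" by (simp add: sorted_map)
  qed (use bound \<open>length ds = m\<close> in auto)
  ultimately show "d \<in> (\<lambda>d. 0 # map Suc d) ` dyck_paths m"
    unfolding d_eq by (metis image_eqI)
next
  fix d assume "d \<in> (\<lambda>d. 0 # map Suc d) ` dyck_paths m"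
  then show "d \<in> {d \<in> dyck_paths (Suc m). \<not> starts_flat d}"
    using Cons_0_map_Suc_in_dyck_paths by (auto simp: starts_flat_def)
qed

text \<open>The path E D1 N D2 of the first-return decomposition: after the first east step, d1 stays
  strictly below the diagonal, which the path first meets again at (k + 1, k + 1).\<close>

definition dyck_join :: "nat \<Rightarrow> nat list \<Rightarrow> nat list \<Rightarrow> nat list" where
  "dyck_join k d1 d2 = 0 # d1 @ map ((+) (Suc k)) d2"

lemma dyck_join_in_dyck_paths:
  assumes "k \<le> m" and d1: "d1 \<in> dyck_paths k" and d2: "d2 \<in> dyck_paths (m - k)"
  shows "dyck_join k d1 d2 \<in> dyck_paths (Suc m)"
proof -
  have len1: "length d1 = k" and "sorted d1" and bound1: "\<forall>i<k. d1 ! i \<le> i"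
    using d1 by (auto simp: in_dyck_paths_iff)
  have len2: "length d2 = m - k" and "sorted d2" and bound2: "\<forall>i<m - k. d2 ! i \<le> i"
    using d2 by (auto simp: in_dyck_paths_iff)
  have below: "\<forall>x\<in>set d1. x < k" using d1 dyck_path_less by blast
  have bound: "(d1 @ map ((+) (Suc k)) d2) ! j \<le> Suc j" if "j < m" for j
  proof (cases "j < k")
    case False
    then have "d2 ! (j - k) \<le> j - k" using that bound2 by simp
    moreover have "(d1 @ map ((+) (Suc k)) d2) ! j = Suc k + d2 ! (j - k)"
      using False that len1 len2 by (simp add: nth_append)
    ultimately show ?thesis using False by linarith
  qed (use len1 bound1 in \<open>auto simp: nth_append\<close>)
  show ?thesis
    unfolding in_dyck_paths_iff dyck_join_def
  proof (intro conjI allI impI)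
    show "length (0 # d1 @ map ((+) (Suc k)) d2) = Suc m" using len1 len2 \<open>k \<le> m\<close> by simp
    show "sorted (0 # d1 @ map ((+) (Suc k)) d2)"
      using \<open>sorted d1\<close> \<open>sorted d2\<close> below by (auto simp: sorted_append sorted_map)
    fix i assume "i < Suc m"
    then show "(0 # d1 @ map ((+) (Suc k)) d2) ! i \<le> i" using bound by (cases i) auto
  qed
qed

lemma dyck_join_inj_on:
  "inj_on (\<lambda>(k, d1, d2). dyck_join k d1 d2) (SIGMA k:{..m}. dyck_paths k \<times> dyck_paths (m - k))"
proof -
  have index_le: "k' \<le> k"
    if "k \<le> m" "d1 \<in> dyck_paths k" "d2 \<in> dyck_paths (m - k)" "k' \<le> m" "e1 \<in> dyck_paths k'"
      and eq: "d1 @ map ((+) (Suc k)) d2 = e1 @ map ((+) (Suc k')) e2" for k d1 d2 k' e1 e2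
  proof (rule ccontr)
    assume "\<not> k' \<le> k"
    with that have "k < k'" "k < m" by auto
    have "length d1 = k" "length d2 = m - k" "length e1 = k'"
      using that by (simp_all add: in_dyck_paths_iff)
    then have "(d1 @ map ((+) (Suc k)) d2) ! k \<ge> Suc k"
      using \<open>k < m\<close> by (simp add: nth_append)
    moreover have "(e1 @ map ((+) (Suc k')) e2) ! k \<le> k"
      using \<open>k < k'\<close> \<open>length e1 = k'\<close> \<open>e1 \<in> dyck_paths k'\<close>
      by (simp add: nth_append in_dyck_paths_iff)
    ultimately show False using eq by simp
  qed
  show ?thesis
  proof (rule inj_onI, clarsimp)
    fix k d1 d2 k' e1 e2
    assume paths: "k \<le> m" "d1 \<in> dyck_paths k" "d2 \<in> dyck_paths (m - k)"
      "k' \<le> m" "e1 \<in> dyck_paths k'" "e2 \<in> dyck_paths (m - k')"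
      and "dyck_join k d1 d2 = dyck_join k' e1 e2"
    then have eq: "d1 @ map ((+) (Suc k)) d2 = e1 @ map ((+) (Suc k')) e2"
      by (simp add: dyck_join_def)
    then have "k = k'"
      using index_le[OF paths(1-5) eq] index_le[OF paths(4,5,6,1,2) eq[symmetric]] by linarith
    moreover have "length d1 = length e1"
      using paths \<open>k = k'\<close> by (simp add: in_dyck_paths_iff)
    ultimately show "k = k' \<and> d1 = e1 \<and> d2 = e2"
      using eq by simp
  qed
qed

lemma dyck_path_first_return:
  assumes "0 # xs \<in> dyck_paths (Suc m)"
  obtains k where "k \<le> m" and "\<forall>j<k. xs ! j \<le> j" and "\<forall>v\<in>set (drop k xs). Suc k \<le> v"
proof
  have "length xs = m" and "sorted xs"
    using assms by (auto simp: in_dyck_paths_iff)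
  define k where "k = (LEAST j. j = m \<or> Suc j \<le> xs ! j)"
  show "k \<le> m" unfolding k_def by (rule Least_le) simp
  show "\<forall>j<k. xs ! j \<le> j"
  proof (intro allI impI)
    fix j assume "j < k"
    then have "\<not> (j = m \<or> Suc j \<le> xs ! j)" unfolding k_def by (rule not_less_Least)
    then show "xs ! j \<le> j" by simp
  qed
  show "\<forall>v\<in>set (drop k xs). Suc k \<le> v"
  proof
    fix v assume v: "v \<in> set (drop k xs)"
    then have "k < m" using \<open>length xs = m\<close> by (cases "k < m") auto
    then have "Suc k \<le> xs ! k"
      using LeastI[of "\<lambda>j. j = m \<or> Suc j \<le> xs ! j" m] by (simp add: k_def)
    moreover have "drop k xs = xs ! k # drop (Suc k) xs"
      using \<open>k < m\<close> \<open>length xs = m\<close> by (simp add: Cons_nth_drop_Suc)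
    with \<open>sorted xs\<close> v have "xs ! k \<le> v"
      using sorted_wrt_drop[of "(\<le>)" xs k] by (auto simp del: sorted_wrt_drop)
    ultimately show "Suc k \<le> v" by simp
  qed
qed

lemma dyck_path_eq_dyck_join:
  assumes "d \<in> dyck_paths (Suc m)"
  obtains k d1 d2 where "k \<le> m" "d1 \<in> dyck_paths k" "d2 \<in> dyck_paths (m - k)"
    "d = dyck_join k d1 d2"
proof -
  obtain xs where d: "d = 0 # xs" using assms by (rule dyck_path_Suc_ConsE)
  have "length xs = m" and "sorted xs" and bound: "\<forall>j<m. xs ! j \<le> Suc j"
    using assms unfolding d in_dyck_paths_iff by auto
  obtain k where "k \<le> m" and below: "\<forall>j<k. xs ! j \<le> j"
    and above: "\<forall>v\<in>set (drop k xs). Suc k \<le> v"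
    using assms unfolding d by (rule dyck_path_first_return)
  define d2 where "d2 = map (\<lambda>v. v - Suc k) (drop k xs)"
  have "take k xs \<in> dyck_paths k"
    using \<open>length xs = m\<close> \<open>sorted xs\<close> \<open>k \<le> m\<close> below by (simp add: in_dyck_paths_iff)
  moreover have "d2 \<in> dyck_paths (m - k)"
    unfolding in_dyck_paths_iff
  proof (intro conjI allI impI)
    have "sorted_wrt (\<lambda>x y. x - Suc k \<le> y - Suc k) (drop k xs)"
      using sorted_wrt_drop[OF \<open>sorted xs\<close>]
      by (simp add: sorted_wrt_mono_rel[of _ "(\<le>)"] diff_le_mono)
    then show "sorted d2" by (simp add: d2_def sorted_map)
    fix i assume "i < m - k"
    then have "xs ! (k + i) \<le> Suc (k + i)" using bound by simp
    then show "d2 ! i \<le> i" using \<open>i < m - k\<close> \<open>length xs = m\<close> by (simp add: d2_def)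
  qed (simp add: d2_def \<open>length xs = m\<close>)
  moreover have "map ((+) (Suc k)) d2 = drop k xs"
    unfolding d2_def map_map by (rule map_idI) (use above in auto)
  then have "d = dyck_join k (take k xs) d2"
    by (simp add: d dyck_join_def)
  ultimately show ?thesis using \<open>k \<le> m\<close> that by blast
qed

lemma dyck_paths_Suc_eq_dyck_join_image:
  "dyck_paths (Suc m) =
    (\<lambda>(k, d1, d2). dyck_join k d1 d2) ` (SIGMA k:{..m}. dyck_paths k \<times> dyck_paths (m - k))"
proof (intro set_eqI iffI)
  fix d assume "d \<in> dyck_paths (Suc m)"
  then show "d \<in> (\<lambda>(k, d1, d2). dyck_join k d1 d2) `
      (SIGMA k:{..m}. dyck_paths k \<times> dyck_paths (m - k))"
    by (rule dyck_path_eq_dyck_join) force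
qed (auto intro: dyck_join_in_dyck_paths)

lemma sum_dyck_paths_Suc_dyck_join:
  "(\<Sum>d\<in>dyck_paths (Suc m). f d) =
    (\<Sum>k\<le>m. \<Sum>d1\<in>dyck_paths k. \<Sum>d2\<in>dyck_paths (m - k). f (dyck_join k d1 d2))"
proof -
  have "(\<Sum>d\<in>dyck_paths (Suc m). f d) =
      (\<Sum>(k, d1, d2)\<in>(SIGMA k:{..m}. dyck_paths k \<times> dyck_paths (m - k)). f (dyck_join k d1 d2))"
    unfolding dyck_paths_Suc_eq_dyck_join_image
    by (subst sum.reindex[OF dyck_join_inj_on]) (simp add: case_prod_beta)
  also have "\<dots> = (\<Sum>k\<le>m. \<Sum>(d1, d2)\<in>dyck_paths k \<times> dyck_paths (m - k). f (dyck_join k d1 d2))"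
    by (subst sum.Sigma[symmetric]) (auto simp: finite_dyck_paths)
  also have "\<dots> = (\<Sum>k\<le>m. \<Sum>d1\<in>dyck_paths k. \<Sum>d2\<in>dyck_paths (m - k). f (dyck_join k d1 d2))"
    by (simp add: sum.cartesian_product)
  finally show ?thesis .
qed

definition weight :: "'a::comm_ring_1 \<Rightarrow> 'a \<Rightarrow> nat list \<Rightarrow> 'a" where
  "weight t p d = t ^ seg d * p ^ lseg d"

lemma weight_Nil: "weight t p [] = p"
  by (simp add: weight_def seg_def lseg_no_segments)

lemma weight_Cons_0_map_Suc: "weight t p (0 # map Suc d) = p * weight t p d"
proof -
  have "map Suc d = [] \<or> hd (map Suc d) \<noteq> 0" by (cases d) auto
  then show ?thesis
    by (simp add: weight_def seg_Cons_hd_neq lseg_Cons_hd_neq seg_map lseg_map)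
qed

lemma weight_Cons_Cons_Cons: "weight t p (x # x # x # xs) = p * weight t p (x # x # xs)"
  by (simp add: weight_def seg_Cons_Cons_Cons lseg_Cons_Cons_Cons)

lemma weight_Cons_Cons_0_map_Suc: "weight t p (0 # 0 # map Suc d) = t * p ^ 2 * weight t 1 d"
proof -
  have "map Suc d = [] \<or> hd (map Suc d) \<noteq> 0" by (cases d) auto
  then show ?thesis
    by (simp add: weight_def seg_Cons_Cons_hd_neq lseg_Cons_Cons_hd_neq seg_map)
qed

lemma weight_dyck_join:
  assumes "d1 \<in> dyck_paths (Suc j)"
  shows "weight t p (dyck_join (Suc j) d1 d2) = weight t p (0 # d1) * weight t 1 d2"
proof -
  obtain ds where d1: "d1 = 0 # ds" using assms by (rule dyck_path_Suc_ConsE)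
  let ?raised = "map ((+) (Suc (Suc j))) d2"
  have "last d1 < Suc j" using dyck_path_less[OF assms] d1 by simp
  then have "last (0 # d1) < Suc (Suc j)" using d1 by simp
  then have boundary: "0 # d1 = [] \<or> ?raised = [] \<or> last (0 # d1) \<noteq> hd ?raised"
    by (cases d2) auto
  have join: "dyck_join (Suc j) d1 d2 = (0 # d1) @ ?raised" by (simp add: dyck_join_def)
  have "seg (dyck_join (Suc j) d1 d2) = seg (0 # d1) + seg d2"
    unfolding join seg_append[OF boundary] by (simp add: seg_map)
  moreover have "segments (0 # d1) \<noteq> {}" unfolding d1 by (rule segments_Cons_Cons_not_empty)
  then have "lseg (dyck_join (Suc j) d1 d2) = lseg (0 # d1)"
    unfolding join lseg_append[OF boundary] by simp
  ultimately show ?thesis by (simp add: weight_def power_add)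
qed

lemma starts_flat_dyck_join:
  assumes "d1 \<in> dyck_paths k"
  shows "starts_flat (dyck_join k d1 d2) \<longleftrightarrow> 0 < k"
proof (cases k)
  case 0
  with assms have "d1 = []" by (simp add: in_dyck_paths_iff)
  with 0 show ?thesis by (cases d2) (auto simp: starts_flat_def dyck_join_def)
next
  case (Suc j)
  with assms obtain ds where "d1 = 0 # ds" by (metis dyck_path_Suc_ConsE)
  with Suc show ?thesis by (simp add: starts_flat_def dyck_join_def)
qed

section \<open>Generating functions\<close>

unbundle fps_syntax

lemma Cfps_nth: "Cfps t p $ n = (\<Sum>d\<in>dyck_paths n. weight t p d)"
  by (simp add: Cfps_def dyck_paths_0 weight_def weight_Nil[unfolded weight_def])

lemma Cfps_nth_0: "Cfps t p $ 0 = p"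
  by (simp add: Cfps_def)

definition Cfps_flat :: "'a::comm_ring_1 \<Rightarrow> 'a \<Rightarrow> 'a fps" where
  "Cfps_flat t p = Abs_fps (\<lambda>n. \<Sum>d\<in>{d \<in> dyck_paths n. starts_flat d}. weight t p d)"

lemma Cfps_flat_nth_0: "Cfps_flat t p $ 0 = 0"
proof -
  have no_paths: "{d \<in> dyck_paths 0. starts_flat d} = {}"
    by (auto simp: dyck_paths_0 starts_flat_def)
  show ?thesis unfolding Cfps_flat_def fps_nth_Abs_fps unfolding no_paths by simp
qed

lemma sum_dyck_paths_Suc_starts_flat:
  "(\<Sum>d\<in>dyck_paths (Suc m). f d) =
    (\<Sum>d\<in>{d \<in> dyck_paths (Suc m). starts_flat d}. f d) + (\<Sum>d\<in>dyck_paths m. f (0 # map Suc d))"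
proof -
  have "(\<Sum>d\<in>dyck_paths (Suc m). f d) =
      sum f ({d \<in> dyck_paths (Suc m). starts_flat d} \<union>
        {d \<in> dyck_paths (Suc m). \<not> starts_flat d})"
    by (rule sum.cong) auto
  also have "\<dots> = (\<Sum>d\<in>{d \<in> dyck_paths (Suc m). starts_flat d}. f d) +
      (\<Sum>d\<in>{d \<in> dyck_paths (Suc m). \<not> starts_flat d}. f d)"
    by (rule sum.union_disjoint) (auto simp: finite_dyck_paths)
  also have "(\<Sum>d\<in>{d \<in> dyck_paths (Suc m). \<not> starts_flat d}. f d) =
      (\<Sum>d\<in>dyck_paths m. f (0 # map Suc d))"
    unfolding dyck_paths_Suc_not_starts_flat
    by (rule sum.reindex_cong[of "\<lambda>d. 0 # map Suc d"]) (auto simp: inj_on_def)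
  finally show ?thesis .
qed

lemma Cfps_nth_Suc: "Cfps t p $ Suc m = p * Cfps t p $ m + Cfps_flat t p $ Suc m"
  by (simp add: Cfps_nth Cfps_flat_def sum_dyck_paths_Suc_starts_flat[of "weight t p"]
      weight_Cons_0_map_Suc sum_distrib_left)

lemma sum_weight_Cons_0:
  "(\<Sum>d\<in>dyck_paths (Suc j). weight t p (0 # d)) =
    p * Cfps_flat t p $ Suc j + t * p ^ 2 * Cfps t 1 $ j"
proof -
  have "(\<Sum>d\<in>{d \<in> dyck_paths (Suc j). starts_flat d}. weight t p (0 # d)) =
      p * Cfps_flat t p $ Suc j"
    by (auto simp: Cfps_flat_def sum_distrib_left starts_flat_def weight_Cons_Cons_Cons
        intro: sum.cong)
  moreover have "(\<Sum>d\<in>dyck_paths j. weight t p (0 # 0 # map Suc d)) = t * p ^ 2 * Cfps t 1 $ j"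
    by (simp add: Cfps_nth weight_Cons_Cons_0_map_Suc sum_distrib_left mult.assoc)
  ultimately show ?thesis
    by (simp add: sum_dyck_paths_Suc_starts_flat[of "\<lambda>d. weight t p (0 # d)"])
qed

lemma Cfps_flat_nth_Suc:
  "Cfps_flat t p $ Suc m =
    (\<Sum>j<m. (p * Cfps_flat t p $ Suc j + t * p ^ 2 * Cfps t 1 $ j) * Cfps t 1 $ (m - Suc j))"
proof -
  let ?w = "\<lambda>d. if starts_flat d then weight t p d else 0"
  let ?h = "\<lambda>k. \<Sum>d1\<in>dyck_paths k. \<Sum>d2\<in>dyck_paths (m - k). ?w (dyck_join k d1 d2)"
  have "Cfps_flat t p $ Suc m = (\<Sum>d\<in>dyck_paths (Suc m). ?w d)"
    by (simp add: Cfps_flat_def sum.inter_filter finite_dyck_paths)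
  also have "\<dots> = (\<Sum>k\<le>m. ?h k)"
    by (rule sum_dyck_paths_Suc_dyck_join)
  also have "\<dots> = (\<Sum>j<m. ?h (Suc j))"
  proof -
    have "?h 0 = 0"
      using starts_flat_dyck_join[of "[]" 0] by (simp add: dyck_paths_0)
    then show ?thesis by (simp add: sum.atMost_shift)
  qed
  also have "\<dots> =
      (\<Sum>j<m. (\<Sum>d1\<in>dyck_paths (Suc j). weight t p (0 # d1)) * Cfps t 1 $ (m - Suc j))"
  proof (rule sum.cong[OF refl])
    fix j
    have "?h (Suc j) = (\<Sum>d1\<in>dyck_paths (Suc j). \<Sum>d2\<in>dyck_paths (m - Suc j).
        weight t p (0 # d1) * weight t 1 d2)"
      by (intro sum.cong refl) (simp add: starts_flat_dyck_join weight_dyck_join)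
    then show "?h (Suc j) =
        (\<Sum>d1\<in>dyck_paths (Suc j). weight t p (0 # d1)) * Cfps t 1 $ (m - Suc j)"
      by (simp add: Cfps_nth sum_product)
  qed
  finally show ?thesis by (simp add: sum_weight_Cons_0)
qed

lemma fps_mult_nth_shift:
  fixes f g :: "'a::comm_ring_1 fps"
  assumes "f $ 0 = 0"
  shows "(f * g) $ m = (\<Sum>j<m. f $ Suc j * g $ (m - Suc j))"
  using assms by (simp add: fps_mult_nth atLeast0AtMost sum.atMost_shift)

lemma Cfps_eq_Cfps_flat: "Cfps t p - fps_const p * fps_X * Cfps t p - fps_const p = Cfps_flat t p"
proof (rule fps_ext)
  fix n
  show "(Cfps t p - fps_const p * fps_X * Cfps t p - fps_const p) $ n = Cfps_flat t p $ n"
    by (cases n) (simp_all add: Cfps_nth_0 Cfps_nth_Suc Cfps_flat_nth_0 mult.assoc)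
qed

lemma Cfps_flat_functional_eq:
  "Cfps_flat t p =
    fps_X * ((fps_const p * Cfps_flat t p + fps_const (t * p ^ 2) * (fps_X * Cfps t 1)) * Cfps t 1)"
    (is "_ = fps_X * (?G * _)")
proof (rule fps_ext)
  fix n
  have "?G $ 0 = 0" by (simp add: Cfps_flat_nth_0)
  show "Cfps_flat t p $ n = (fps_X * (?G * Cfps t 1)) $ n"
  proof (cases n)
    case (Suc m)
    have "(fps_X * (?G * Cfps t 1)) $ Suc m = (\<Sum>j<m. ?G $ Suc j * Cfps t 1 $ (m - Suc j))"
      using fps_mult_nth_shift[OF \<open>?G $ 0 = 0\<close>] by simp
    also have "\<dots> =
        (\<Sum>j<m. (p * Cfps_flat t p $ Suc j + t * p ^ 2 * Cfps t 1 $ j) * Cfps t 1 $ (m - Suc j))"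
      by simp
    also have "\<dots> = Cfps_flat t p $ Suc m"
      by (rule Cfps_flat_nth_Suc[symmetric])
    finally show ?thesis using Suc by simp
  qed (simp add: Cfps_flat_nth_0)
qed

theorem lemma4p5:
  fixes t p :: "'a::comm_ring_1"
  defines "C \<equiv> Cfps t p" and "C1 \<equiv> Cfps t 1"
  shows "fps_const (t * p ^ 2) * fps_X ^ 2 * C1 ^ 2
         + fps_const p * fps_X * (C - fps_const p * fps_X * C - fps_const p) * C1
         - (C - fps_const p * fps_X * C - fps_const p) = 0"
proof -
  let ?T = "Cfps_flat t p"
  have flat: "C - fps_const p * fps_X * C - fps_const p = ?T"
    unfolding C_def by (rule Cfps_eq_Cfps_flat)
  have "?T = fps_X * ((fps_const p * ?T + fps_const (t * p ^ 2) * (fps_X * C1)) * C1)"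
    unfolding C1_def by (rule Cfps_flat_functional_eq)
  also have "\<dots> = fps_const (t * p ^ 2) * fps_X ^ 2 * C1 ^ 2 + fps_const p * fps_X * ?T * C1"
    by (simp add: algebra_simps power2_eq_square)
  finally show ?thesis
    unfolding flat right_minus_eq by (rule sym)
qed

end
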